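(* Let $-\infty<a<b<\infty$ and let $H\in\mathbb H_{a,b}$ be in the limit circle case. Let $c>0$ and let $\kappa_H$ be the function produced by the algorithm with constant $c$. Let $r>0$ and let $a=s_0<s_1<\dots<s_{k-1}<s_k=b$. - (i) If $\det\Omega(s_{l-1},s_l)\le c/r^2$ for all $l\in\{1,\dots,k\}$, then $\kappa_H(r)\le k$. - (ii) If $\det\Omega(s_{l-1},s_l)\ge c/r^2$ for all $l\in\{1,\dots,k-1\}$, then $\kappa_H(r)\ge k$. - (iii) The function $\kappa_H$ is non-decreasing on $(0,\infty)$. - (iv) $\kappa_H(nr)\le n\,\kappa_H(r)$ for every positive integer $n$ and every $r>0$.
   Context: Hamiltonians: $\mathbb H_{a,b}$ consists of measurable $H:(a,b)\to\mathbb R^{2\times2}$, locally integrable on $[a,c)$ for all $c<b$, with $H(t)\ge0$ a.e. and $\{H=0\}$ null. The limit circle case means $\int_a^b\operatorname{tr}H<\infty$. Put $\Omega(s,t)=\int_s^tH(u)\,du$. Algorithm for $\kappa_H$ (constant $c$): for $r>0$ set $\sigma_0=a$. Recursively: - if $\det\Omega(\sigma_{j-1},b)>c/r^2$, let $\sigma_j\in(\sigma_{j-1},b)$ be the unique point with $\det\Omega(\sigma_{j-1},\sigma_j)=c/r^2$; - otherwise set $\sigma_j=b$, $\kappa_H(r)=j$, and stop. This terminates after finitely many steps. *)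

theory Defs
  imports "HOL-Analysis.Analysis"
begin

definition psd2 :: "real^2^2 \<Rightarrow> bool" where
  "psd2 M \<longleftrightarrow> transpose M = M \<and> (\<forall>x. 0 \<le> x \<bullet> (M *v x))"

definition hamiltonian :: "real \<Rightarrow> real \<Rightarrow> (real \<Rightarrow> real^2^2) \<Rightarrow> bool" where
  "hamiltonian a b H \<longleftrightarrow>
     set_borel_measurable lborel {a<..<b} H \<and>
     (\<forall>c\<in>{a<..<b}. set_integrable lborel {a..<c} H) \<and>
     (AE t\<in>{a<..<b} in lborel. psd2 (H t)) \<and>
     {t\<in>{a<..<b}. H t = 0} \<in> null_sets lborel"

definition limit_circle :: "real \<Rightarrow> real \<Rightarrow> (real \<Rightarrow> real^2^2) \<Rightarrow> bool" where
  "limit_circle a b H \<longleftrightarrow> set_integrable lborel {a<..<b} (\<lambda>t. trace (H t))"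

definition Omega :: "(real \<Rightarrow> real^2^2) \<Rightarrow> real \<Rightarrow> real \<Rightarrow> real^2^2" where
  "Omega H s t = (LINT u:{s..t}|lborel. H u)"

fun alg_sigma :: "real \<Rightarrow> real \<Rightarrow> (real \<Rightarrow> real^2^2) \<Rightarrow> real \<Rightarrow> real \<Rightarrow> nat \<Rightarrow> real" where
  "alg_sigma a b H c r 0 = a"
| "alg_sigma a b H c r (Suc j) =
     (let \<sigma> = alg_sigma a b H c r j in
      if det (Omega H \<sigma> b) > c / r\<^sup>2
      then (THE s. s \<in> {\<sigma><..<b} \<and> det (Omega H \<sigma> s) = c / r\<^sup>2)
      else b)"

definition kappa :: "real \<Rightarrow> real \<Rightarrow> (real \<Rightarrow> real^2^2) \<Rightarrow> real \<Rightarrow> real \<Rightarrow> nat" where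
  "kappa a b H c r = (LEAST j. 1 \<le> j \<and> \<not> (det (Omega H (alg_sigma a b H c r (j - 1)) b) > c / r\<^sup>2))"

end

theory Submission
  imports Defs
begin

text \<open>
  For \<open>a \<le> s \<le> u \<le> t \<le> b\<close> the matrices \<open>\<Omega>(s, t)\<close> are positive semidefinite and additive,
  \<open>\<Omega>(s, t) = \<Omega>(s, u) + \<Omega>(u, t)\<close>. For positive semidefinite \<open>2 \<times> 2\<close> matrices Minkowski's
  inequality \<open>\<surd>det A + \<surd>det B \<le> \<surd>det (A + B)\<close> holds, and \<open>det A < det (A + B)\<close> if
  \<open>det A > 0\<close> and \<open>B \<noteq> 0\<close>. Hence \<open>det \<Omega>(s, t)\<close> grows when the interval grows, strictly once it is
  positive (\<open>H\<close> vanishes only on a null set), and \<open>\<surd>det \<Omega>\<close> is superadditive along chains.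

  By monotonicity the greedy points \<open>\<sigma>\<^sub>j\<close> stay ahead of the points of any partition whose pieces
  have \<open>det \<Omega> \<le> c/r\<^sup>2\<close>, which gives (i), and behind those of any partition whose inner pieces
  have \<open>det \<Omega> \<ge> c/r\<^sup>2\<close>, which gives (ii). Part (iii) is (ii) applied to the partition produced
  for a smaller \<open>r\<close>. For (iv), group the pieces produced for \<open>n r\<close> into blocks of \<open>n\<close>:
  by superadditivity each block has \<open>det \<Omega> \<ge> n\<^sup>2 c/(n r)\<^sup>2 = c/r\<^sup>2\<close>, so (ii) applies.
  Superadditivity also shows that the algorithm terminates.
\<close>

lemma nonneg_binary_form_coeffs:
  fixes p q r :: real
  assumes form: "\<And>x y. 0 \<le> x\<^sup>2 * p + 2 * x * y * q + y\<^sup>2 * r"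
  shows "0 \<le> p" "0 \<le> r" "q\<^sup>2 \<le> p * r"
proof -
  show p: "0 \<le> p" and r: "0 \<le> r" using form[of 1 0] form[of 0 1] by simp_all
  have "0 \<le> p * (p * r - q\<^sup>2)"
    using form[of q "- p"] by (simp add: power2_eq_square algebra_simps)
  moreover have "0 \<le> r * (p * r - q\<^sup>2)"
    using form[of r "- q"] by (simp add: power2_eq_square algebra_simps)
  moreover have "q = 0" if "p = 0" "r = 0"
    using form[of 1 "- q"] that by (simp add: power2_eq_square) (metis not_real_square_gt_zero not_le)
  ultimately show "q\<^sup>2 \<le> p * r"
    using p r by (cases "p = 0 \<and> r = 0") (auto simp: zero_le_mult_iff)
qed

lemma psd2_symmetric:
  assumes "psd2 M"
  shows "M$2$1 = M$1$2"
proof -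
  have "transpose M $1$2 = M$1$2" using assms unfolding psd2_def by simp
  then show ?thesis by (simp add: transpose_def)
qed

lemma psd2_quadratic_form:
  assumes "psd2 M"
  shows "0 \<le> x\<^sup>2 * M$1$1 + 2 * x * y * M$1$2 + y\<^sup>2 * M$2$2"
proof -
  define v :: "real^2" where "v = (\<chi> i. if i = 1 then x else y)"
  have "0 \<le> v \<bullet> (M *v v)" using assms unfolding psd2_def by blast
  also have "\<dots> = x * (x * M$1$1 + y * M$1$2) + y * (x * M$2$1 + y * M$2$2)"
    unfolding v_def inner_vec_def matrix_vector_mult_def by (simp add: sum_2 algebra_simps)
  also have "\<dots> = x\<^sup>2 * M$1$1 + 2 * x * y * M$1$2 + y\<^sup>2 * M$2$2"
    unfolding psd2_symmetric[OF assms] by (simp add: power2_eq_square algebra_simps)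
  finally show ?thesis .
qed

lemma psd2_entries:
  assumes "psd2 M"
  shows "0 \<le> M$1$1" "0 \<le> M$2$2" "(M$1$2)\<^sup>2 \<le> M$1$1 * M$2$2"
  using nonneg_binary_form_coeffs[OF psd2_quadratic_form[OF assms]] by auto

lemma det_psd2:
  assumes "psd2 M"
  shows "det M = M$1$1 * M$2$2 - (M$1$2)\<^sup>2"
  using psd2_symmetric[OF assms] by (simp add: det_2 power2_eq_square)

lemma det_psd2_nonneg: "psd2 M \<Longrightarrow> 0 \<le> det M"
  by (simp add: det_psd2 psd2_entries(3))

lemma trace_2: "trace (M :: 'a::semiring_1^2^2) = M$1$1 + M$2$2"
  by (simp add: trace_def sum_2)

lemma trace_psd2_pos:
  assumes "psd2 M" "M \<noteq> 0"
  shows "0 < trace M"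
proof (rule ccontr)
  assume "\<not> 0 < trace M"
  then have "M$1$1 = 0" "M$2$2 = 0" using psd2_entries[OF assms(1)] by (auto simp: trace_2)
  moreover have "M$1$2 = 0" "M$2$1 = 0"
    using calculation psd2_entries(3)[OF assms(1)] psd2_symmetric[OF assms(1)] by auto
  ultimately have "M = 0" by (simp add: vec_eq_iff forall_2)
  with assms(2) show False by contradiction
qed

lemma det_add_psd2:
  assumes "psd2 A" "psd2 B"
  shows "det (A + B) = det A + det B + (A$2$2 * B$1$1 + A$1$1 * B$2$2 - 2 * A$1$2 * B$1$2)"
  using psd2_symmetric[OF assms(1)] psd2_symmetric[OF assms(2)] by (simp add: det_2 algebra_simps)

lemma two_sqrt_mult_le_cross_sum:
  fixes a1 a3 b1 b3 :: real
  assumes "0 \<le> a1" "0 \<le> a3" "0 \<le> b1" "0 \<le> b3"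
  shows "2 * (sqrt (a1 * a3) * sqrt (b1 * b3)) \<le> a3 * b1 + a1 * b3"
proof -
  have "sqrt (a1 * a3) * sqrt (b1 * b3) = sqrt ((a3 * b1) * (a1 * b3))"
    by (simp add: real_sqrt_mult[symmetric] ac_simps)
  also have "\<dots> \<le> (a3 * b1 + a1 * b3) / 2"
    using assms by (intro arith_geo_mean_sqrt) auto
  finally show ?thesis by simp
qed

lemma sqrt_det_superadditive_psd2:
  assumes A: "psd2 A" and B: "psd2 B"
  shows "sqrt (det A) + sqrt (det B) \<le> sqrt (det (A + B))"
proof -
  define a1 a2 a3 b1 b2 b3 where
    "a1 = A$1$1" "a2 = A$1$2" "a3 = A$2$2" "b1 = B$1$1" "b2 = B$1$2" "b3 = B$2$2"
  note defs = a1_a2_a3_b1_b2_b3_def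
  have a: "0 \<le> a1" "0 \<le> a3" "a2\<^sup>2 \<le> a1 * a3" and b: "0 \<le> b1" "0 \<le> b3" "b2\<^sup>2 \<le> b1 * b3"
    using psd2_entries[OF A] psd2_entries[OF B] by (simp_all add: defs)
  define p q where "p = sqrt (a1 * a3)" "q = sqrt (b1 * b3)"
  have p: "0 \<le> p" "p\<^sup>2 = a1 * a3" "\<bar>a2\<bar> \<le> p" and q: "0 \<le> q" "q\<^sup>2 = b1 * b3" "\<bar>b2\<bar> \<le> q"
    using a b by (auto simp: p_q_def intro!: real_le_rsqrt)
  have detA: "det A = p\<^sup>2 - a2\<^sup>2" and detB: "det B = q\<^sup>2 - b2\<^sup>2"
    using det_psd2[OF A] det_psd2[OF B] p q by (simp_all add: defs)
  \<comment> \<open>Aczel's inequality \<open>(p q - x y)\<^sup>2 \<ge> (p\<^sup>2 - x\<^sup>2) (q\<^sup>2 - y\<^sup>2)\<close> for the off-diagonal entries,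
    AM-GM for the diagonal ones\<close>
  have "sqrt (det A) * sqrt (det B) \<le> p * q - a2 * b2"
  proof -
    have "\<bar>a2 * b2\<bar> \<le> p * q" using p q by (simp add: abs_mult mult_mono)
    moreover have "det A * det B = (p * q - a2 * b2)\<^sup>2 - (p * b2 - q * a2)\<^sup>2"
      unfolding detA detB by (simp add: power2_eq_square algebra_simps)
    ultimately show ?thesis
      by (simp add: real_sqrt_mult[symmetric] real_le_lsqrt)
  qed
  with two_sqrt_mult_le_cross_sum[OF a(1,2) b(1,2)]
  have "(sqrt (det A) + sqrt (det B))\<^sup>2 \<le> det (A + B)"
    using det_add_psd2[OF A B] det_psd2_nonneg[OF A] det_psd2_nonneg[OF B]
    by (simp add: power2_sum defs p_q_def)
  then show ?thesis by (rule real_le_rsqrt)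
qed

lemma det_add_psd2_mono:
  assumes "psd2 A" "psd2 B"
  shows "det A \<le> det (A + B)"
proof -
  have "sqrt (det A) \<le> sqrt (det (A + B))"
    using sqrt_det_superadditive_psd2[OF assms] real_sqrt_ge_zero[OF det_psd2_nonneg[OF assms(2)]] by linarith
  then show ?thesis by simp
qed

lemma det_add_psd2_strict_mono:
  assumes A: "psd2 A" and B: "psd2 B" and "0 < det A" and "0 < trace B"
  shows "det A < det (A + B)"
proof -
  define a1 a2 a3 b1 b2 b3 where
    "a1 = A$1$1" "a2 = A$1$2" "a3 = A$2$2" "b1 = B$1$1" "b2 = B$1$2" "b3 = B$2$2"
  note defs = a1_a2_a3_b1_b2_b3_def
  have a: "0 \<le> a1" "0 \<le> a3" "a2\<^sup>2 < a1 * a3" and b: "0 \<le> b1" "0 \<le> b3" "b2\<^sup>2 \<le> b1 * b3"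
    and tr: "0 < b1 + b3"
    using psd2_entries[OF A] psd2_entries[OF B] det_psd2[OF A] assms(3,4) by (simp_all add: defs trace_2)
  have "0 < a1 * a3" using a(3) by (meson le_less_trans zero_le_power2)
  then have a13: "0 < a1" "0 < a3" using a(1,2) by (auto simp: zero_less_mult_iff)
  define p q where "p = sqrt (a1 * a3)" "q = sqrt (b1 * b3)"
  have p: "\<bar>a2\<bar> < p" and q: "0 \<le> q" "\<bar>b2\<bar> \<le> q"
    using a b by (auto simp: p_q_def intro!: real_less_rsqrt real_le_rsqrt)
  have "0 < a3 * b1 + a1 * b3 - 2 * a2 * b2"
  proof (cases "q = 0")
    case True
    then have "b2 = 0" using q by simp
    moreover have "0 < a3 * b1 + a1 * b3"
      using tr a13 b(1,2) by (smt (verit) mult_pos_pos mult_nonneg_nonneg)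
    ultimately show ?thesis by simp
  next
    case False
    have "a2 * b2 \<le> \<bar>a2\<bar> * \<bar>b2\<bar>" by (simp flip: abs_mult)
    also have "\<dots> \<le> \<bar>a2\<bar> * q" using q by (simp add: mult_left_mono)
    also have "\<dots> < p * q" using p q False by simp
    finally show ?thesis
      using two_sqrt_mult_le_cross_sum[OF a(1,2) b(1,2)] by (simp add: p_q_def)
  qed
  then show ?thesis using det_add_psd2[OF A B] det_psd2_nonneg[OF B] by (simp add: defs)
qed

lemma bounded_linear_transpose: "bounded_linear (transpose :: real^'n^'m \<Rightarrow> real^'m^'n)"
  unfolding linear_conv_bounded_linear[symmetric]
  by (rule linearI) (simp_all add: transpose_def vec_eq_iff)

lemma bounded_linear_quadratic_form: "bounded_linear (\<lambda>M :: real^'n^'n. v \<bullet> (M *v v))"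
  unfolding linear_conv_bounded_linear[symmetric]
  by (rule linearI) (simp_all add: matrix_vector_mult_add_rdistrib inner_add_right flip: scaleR_matrix_vector_assoc)

lemma bounded_linear_trace: "bounded_linear (trace :: real^'n^'n \<Rightarrow> real)"
  unfolding linear_conv_bounded_linear[symmetric]
  by (rule linearI) (simp_all add: trace_def sum.distrib sum_distrib_left)

lemma psd2_integral:
  assumes f: "f integrable_on S" and psd: "\<And>u. u \<in> S \<Longrightarrow> psd2 (f u)"
  shows "psd2 (integral S f)"
  unfolding psd2_def
proof (intro conjI allI)
  have "transpose (integral S f) = integral S (\<lambda>u. transpose (f u))"
    using integral_linear[OF f bounded_linear_transpose] by (simp add: o_def)
  also have "\<dots> = integral S f"
    using psd unfolding psd2_def by (intro integral_cong) auto
  finally show "transpose (integral S f) = integral S f" .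
  fix v :: "real^2"
  have "v \<bullet> (integral S f *v v) = integral S (\<lambda>u. v \<bullet> (f u *v v))"
    using integral_linear[OF f bounded_linear_quadratic_form] by (simp add: o_def)
  also have "\<dots> \<ge> 0"
    using psd integrable_linear[OF f bounded_linear_quadratic_form]
    unfolding psd2_def by (intro integral_nonneg) (auto simp: o_def)
  finally show "0 \<le> v \<bullet> (integral S f *v v)" .
qed

lemma integral_pos:
  fixes f :: "'a::euclidean_space \<Rightarrow> real"
  assumes f: "f integrable_on S" and pos: "\<And>x. x \<in> S \<Longrightarrow> 0 < f x" and S: "\<not> negligible S"
  shows "0 < integral S f"
proof -
  have f_abs: "f absolutely_integrable_on S"
    using nonnegative_absolutely_integrable_1[OF f] pos by (simp add: less_imp_le)
  have "integral S f \<noteq> 0"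
  proof
    assume "integral S f = 0"
    then have "integral\<^sup>L lebesgue (\<lambda>x. indicator S x *\<^sub>R f x) = 0"
      using set_lebesgue_integral_eq_integral(2)[OF f_abs] by (simp add: set_lebesgue_integral_def)
    then have "AE x in lebesgue. indicator S x *\<^sub>R f x = 0"
      using f_abs pos by (subst (asm) integral_nonneg_eq_0_iff_AE)
        (auto simp: set_integrable_def indicator_def less_imp_le)
    then have "AE x in lebesgue. x \<notin> S"
      by eventually_elim (use pos in \<open>fastforce simp: indicator_def\<close>)
    then obtain N where "negligible N" "S \<subseteq> N"
      unfolding eventually_ae_filter_negligible by auto
    with S show False using negligible_subset by blast
  qed
  moreover have "0 \<le> integral S f" using integral_nonneg[OF f] pos by (simp add: less_imp_le)
  ultimately show ?thesis by simp
qed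

lemma psd2_norm_le_trace:
  assumes "psd2 M"
  shows "norm M \<le> 2 * trace M"
proof -
  note entries = psd2_entries[OF assms] psd2_symmetric[OF assms]
  have "2 * \<bar>M$1$2\<bar> \<le> trace M"
    using psd2_quadratic_form[OF assms, of 1 1] psd2_quadratic_form[OF assms, of 1 "-1"]
    by (simp add: trace_2)
  moreover have "norm M \<le> norm (M$1) + norm (M$2)"
    unfolding norm_vec_def by (rule order_trans[OF L2_set_le_sum]) (simp_all add: sum_2)
  moreover have "norm (M$1) \<le> \<bar>M$1$1\<bar> + \<bar>M$1$2\<bar>" "norm (M$2) \<le> \<bar>M$2$1\<bar> + \<bar>M$2$2\<bar>"
    using norm_le_l1_cart[of "M$1"] norm_le_l1_cart[of "M$2"] by (simp_all add: sum_2)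
  ultimately show ?thesis using entries by (simp add: trace_2)
qed

definition is_partition :: "real \<Rightarrow> real \<Rightarrow> nat \<Rightarrow> (nat \<Rightarrow> real) \<Rightarrow> bool" where
  "is_partition a b k s \<longleftrightarrow> s 0 = a \<and> s k = b \<and> (\<forall>l<k. s l < s (Suc l))"

lemma is_partition_strict_mono:
  assumes "is_partition a b k s" "i < j" "j \<le> k"
  shows "s i < s j"
proof -
  have "s l < s (Suc l)" if "l \<in> {..<k}" for l
    using assms(1) that unfolding is_partition_def by auto
  from this assms(2) show ?thesis
    by (rule lift_Suc_mono_less_ivl[where N = "{..<k}"]) (use assms(3) in auto)
qed

lemma is_partition_mono:
  assumes "is_partition a b k s" "i \<le> j" "j \<le> k"
  shows "s i \<le> s j"
  using assms(2,3) is_partition_strict_mono[OF assms(1), of i j] by (cases "i < j") auto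

lemma is_partition_in_interval:
  assumes "is_partition a b k s" "l \<le> k"
  shows "s l \<in> {a..b}"
  using is_partition_mono[OF assms(1), of 0 l] is_partition_mono[OF assms(1), of l k] assms
  by (auto simp: is_partition_def)

locale limit_circle_hamiltonian =
  fixes a b :: real and H :: "real \<Rightarrow> real^2^2"
  assumes a_less_b: "a < b"
    and hamiltonian: "hamiltonian a b H"
    and limit_circle: "limit_circle a b H"
begin

lemma set_integrable_H: "set_integrable lborel {a..b} H"
proof -
  have "set_integrable lborel {a<..<b} H"
  proof (rule set_integrable_bound)
    show "set_integrable lborel {a<..<b} (\<lambda>t. 2 * trace (H t))"
      using limit_circle unfolding limit_circle_def by simp
    show "set_borel_measurable lborel {a<..<b} H"
      using hamiltonian unfolding hamiltonian_def by simp
    have "AE t in lborel. t \<in> {a<..<b} \<longrightarrow> psd2 (H t)"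
      using hamiltonian unfolding hamiltonian_def by simp
    then show "AE t in lborel. t \<in> {a<..<b} \<longrightarrow> norm (H t) \<le> norm (2 * trace (H t))"
      by eventually_elim (auto intro: order_trans[OF psd2_norm_le_trace])
  qed
  then show ?thesis
    by (subst set_integrable_discrete_difference[where X = "{a, b}"]) auto
qed

text \<open>\<open>H_reg\<close> agrees with \<open>H\<close> off a null set, so it has the same integrals, while pointwise
  arguments apply to it.\<close>

definition H_reg :: "real \<Rightarrow> real^2^2" where
  "H_reg t = (if psd2 (H t) \<and> H t \<noteq> 0 then H t else mat 1)"

lemma psd2_H_reg: "psd2 (H_reg t)"
  by (simp add: H_reg_def psd2_def)

lemma trace_H_reg_pos: "0 < trace (H_reg t)"
proof (rule trace_psd2_pos[OF psd2_H_reg])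
  have "(mat 1 :: real^2^2) $ 1 $ 1 \<noteq> 0 $ 1 $ 1" by (simp add: mat_def)
  then have "(mat 1 :: real^2^2) \<noteq> 0" by metis
  then show "H_reg t \<noteq> 0" by (simp add: H_reg_def)
qed

lemma negligible_H_reg_neq: "negligible {t \<in> {a..b}. H_reg t \<noteq> H t}"
proof -
  have "AE t in lborel. t \<in> {a<..<b} \<longrightarrow> psd2 (H t)"
    using hamiltonian unfolding hamiltonian_def by simp
  then obtain N where N: "N \<in> null_sets lborel" "{t. \<not> (t \<in> {a<..<b} \<longrightarrow> psd2 (H t))} \<subseteq> N"
    unfolding eventually_ae_filter by auto
  from N(1) have "negligible N"
    by (simp add: negligible_iff_null_sets null_sets_completionI)
  then have "negligible {t \<in> {a<..<b}. \<not> psd2 (H t)}"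
    by (rule negligible_subset) (use N(2) in auto)
  moreover have "negligible {t \<in> {a<..<b}. H t = 0}"
    using hamiltonian unfolding hamiltonian_def negligible_iff_null_sets by (auto intro: null_sets_completionI)
  ultimately have "negligible ({a, b} \<union> {t \<in> {a<..<b}. \<not> psd2 (H t)} \<union> {t \<in> {a<..<b}. H t = 0})"
    by (simp add: negligible_Un)
  then show ?thesis
    by (rule negligible_subset) (auto simp: H_reg_def)
qed

lemma H_reg_integrable_on: "a \<le> s \<Longrightarrow> t \<le> b \<Longrightarrow> H_reg integrable_on {s..t}"
  using integrable_spike[OF set_borel_integral_eq_integral(1)[OF set_integrable_H] negligible_H_reg_neq]
  by (rule integrable_on_subinterval) auto

lemma Omega_eq_integral_H_reg:
  assumes "a \<le> s" "t \<le> b"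
  shows "Omega H s t = integral {s..t} H_reg"
proof -
  have "set_integrable lborel {s..t} H"
    using assms by (intro set_integrable_subset[OF set_integrable_H]) auto
  then have "Omega H s t = integral {s..t} H"
    unfolding Omega_def by (rule set_borel_integral_eq_integral(2))
  also have "\<dots> = integral {s..t} H_reg"
    using assms by (intro integral_spike[OF negligible_H_reg_neq]) auto
  finally show ?thesis .
qed

lemma psd2_Omega: "a \<le> s \<Longrightarrow> t \<le> b \<Longrightarrow> psd2 (Omega H s t)"
  by (simp add: Omega_eq_integral_H_reg psd2_integral H_reg_integrable_on psd2_H_reg)

lemma trace_Omega_pos:
  assumes "a \<le> s" "s < t" "t \<le> b"
  shows "0 < trace (Omega H s t)"
proof -
  have "trace (Omega H s t) = integral {s..t} (\<lambda>u. trace (H_reg u))"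
    using integral_linear[OF H_reg_integrable_on bounded_linear_trace] assms
    by (simp add: Omega_eq_integral_H_reg o_def)
  also have "\<dots> > 0"
  proof (rule integral_pos)
    show "(\<lambda>u. trace (H_reg u)) integrable_on {s..t}"
      using integrable_linear[OF H_reg_integrable_on[OF assms(1,3)] bounded_linear_trace] by (simp add: o_def)
    show "\<not> negligible {s..t}" using negligible_interval(1)[of s t] assms(2) by simp
  qed (rule trace_H_reg_pos)
  finally show ?thesis .
qed

lemma Omega_add:
  "a \<le> s \<Longrightarrow> s \<le> u \<Longrightarrow> u \<le> t \<Longrightarrow> t \<le> b \<Longrightarrow> Omega H s u + Omega H u t = Omega H s t"
  by (simp add: Omega_eq_integral_H_reg Henstock_Kurzweil_Integration.integral_combine H_reg_integrable_on)

lemma Omega_self: "a \<le> s \<Longrightarrow> s \<le> b \<Longrightarrow> Omega H s s = 0"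
  by (simp add: Omega_eq_integral_H_reg)

lemma continuous_on_Omega: "a \<le> s \<Longrightarrow> continuous_on {s..b} (Omega H s)"
  using indefinite_integral_continuous_1[OF H_reg_integrable_on[of s b]]
  by (rule continuous_on_eq) (auto simp: Omega_eq_integral_H_reg)

lemma det_Omega_mono:
  assumes "a \<le> s'" "s' \<le> s" "s \<le> t" "t \<le> t'" "t' \<le> b"
  shows "det (Omega H s t) \<le> det (Omega H s' t')"
proof -
  have "det (Omega H s t) \<le> det (Omega H s t + Omega H t t')"
    using assms by (intro det_add_psd2_mono psd2_Omega) auto
  also have "Omega H s t + Omega H t t' = Omega H s t'"
    using assms by (intro Omega_add) auto
  also have "det (Omega H s t') \<le> det (Omega H s t' + Omega H s' s)"
    using assms by (intro det_add_psd2_mono psd2_Omega) auto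
  also have "Omega H s t' + Omega H s' s = Omega H s' t'"
    using assms Omega_add[of s' s t'] by (simp add: add.commute)
  finally show ?thesis .
qed

lemma det_Omega_strict_mono:
  assumes "a \<le> s" "s \<le> t" "t < t'" "t' \<le> b" "0 < det (Omega H s t)"
  shows "det (Omega H s t) < det (Omega H s t')"
proof -
  have "det (Omega H s t) < det (Omega H s t + Omega H t t')"
    using assms by (intro det_add_psd2_strict_mono psd2_Omega trace_Omega_pos) auto
  also have "Omega H s t + Omega H t t' = Omega H s t'"
    using assms by (intro Omega_add) auto
  finally show ?thesis .
qed

lemma sum_sqrt_det_Omega_le:
  assumes "a \<le> t 0" "t n \<le> b" "\<And>i. i < n \<Longrightarrow> t i \<le> t (Suc i)"
  shows "(\<Sum>i<n. sqrt (det (Omega H (t i) (t (Suc i))))) \<le> sqrt (det (Omega H (t 0) (t n)))"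
  using assms
proof (induction n)
  case 0
  then show ?case by (simp add: det_psd2_nonneg psd2_Omega)
next
  case (Suc n)
  have "t 0 \<le> t n" "t n \<le> t (Suc n)"
    using Suc.prems(3) by (auto intro: lift_Suc_mono_le_ivl[where N = "{..<Suc n}"])
  then have "t n \<le> b" using Suc.prems(2) by linarith
  have "(\<Sum>i<Suc n. sqrt (det (Omega H (t i) (t (Suc i)))))
      \<le> sqrt (det (Omega H (t 0) (t n))) + sqrt (det (Omega H (t n) (t (Suc n))))"
    using Suc.IH Suc.prems \<open>t n \<le> b\<close> by simp
  also have "\<dots> \<le> sqrt (det (Omega H (t 0) (t n) + Omega H (t n) (t (Suc n))))"
    using Suc.prems \<open>t n \<le> b\<close> \<open>t 0 \<le> t n\<close> by (intro sqrt_det_superadditive_psd2 psd2_Omega) auto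
  also have "Omega H (t 0) (t n) + Omega H (t n) (t (Suc n)) = Omega H (t 0) (t (Suc n))"
    using Suc.prems \<open>t 0 \<le> t n\<close> \<open>t n \<le> t (Suc n)\<close> by (intro Omega_add) auto
  finally show ?case .
qed

lemma det_Omega_chain_ge:
  assumes "a \<le> t 0" "t n \<le> b" "\<And>i. i < n \<Longrightarrow> t i \<le> t (Suc i)"
    and "0 \<le> d" "\<And>i. i < n \<Longrightarrow> d \<le> det (Omega H (t i) (t (Suc i)))"
  shows "(real n)\<^sup>2 * d \<le> det (Omega H (t 0) (t n))"
proof -
  have "sqrt ((real n)\<^sup>2 * d) = (\<Sum>i<n. sqrt d)" by (simp add: real_sqrt_mult)
  also have "\<dots> \<le> (\<Sum>i<n. sqrt (det (Omega H (t i) (t (Suc i)))))"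
    using assms(5) by (intro sum_mono) simp
  also have "\<dots> \<le> sqrt (det (Omega H (t 0) (t n)))"
    using assms(1-3) by (rule sum_sqrt_det_Omega_le)
  finally show ?thesis by simp
qed

lemma ex1_det_Omega_eq:
  assumes "a \<le> x" "x \<le> b" "0 < e" "e < det (Omega H x b)"
  shows "\<exists>!s. s \<in> {x<..<b} \<and> det (Omega H x s) = e"
proof -
  have "continuous_on {x..b} (\<lambda>s. det (Omega H x s))"
    using continuous_on_Omega[OF assms(1)] unfolding det_2 by (intro continuous_intros)
  moreover have "det (Omega H x x) = 0" using assms by (simp add: Omega_self det_2)
  ultimately obtain s where s: "x \<le> s" "s \<le> b" "det (Omega H x s) = e"
    using IVT'[of "\<lambda>s. det (Omega H x s)" x e b] assms by auto
  with assms have "s \<in> {x<..<b}" by (auto simp: Omega_self det_2 order.order_iff_strict)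
  moreover have "s' = s" if "s' \<in> {x<..<b}" "det (Omega H x s') = e" for s'
    using det_Omega_strict_mono[of x s s'] det_Omega_strict_mono[of x s' s] that s assms
    by (cases s' s rule: linorder_cases) auto
  ultimately show ?thesis using s by blast
qed

end

locale kappa_algorithm = limit_circle_hamiltonian +
  fixes c :: real
  assumes c_pos: "0 < c"
begin

abbreviation \<sigma> :: "real \<Rightarrow> nat \<Rightarrow> real" where
  "\<sigma> r \<equiv> alg_sigma a b H c r"

abbreviation \<kappa> :: "real \<Rightarrow> nat" where
  "\<kappa> \<equiv> kappa a b H c"

lemma threshold_pos: "r \<noteq> 0 \<Longrightarrow> 0 < c / r\<^sup>2"
  using c_pos by simp

declare alg_sigma.simps(2) [simp del]

lemma alg_sigma_Suc_if_le: "\<not> c / r\<^sup>2 < det (Omega H (\<sigma> r j) b) \<Longrightarrow> \<sigma> r (Suc j) = b"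
  by (simp add: alg_sigma.simps(2) Let_def)

lemma alg_sigma_Suc_if_gt:
  assumes "r \<noteq> 0" "\<sigma> r j \<in> {a..b}" "c / r\<^sup>2 < det (Omega H (\<sigma> r j) b)"
  shows "\<sigma> r (Suc j) \<in> {\<sigma> r j<..<b}" "det (Omega H (\<sigma> r j) (\<sigma> r (Suc j))) = c / r\<^sup>2"
proof -
  have "\<exists>!s. s \<in> {\<sigma> r j<..<b} \<and> det (Omega H (\<sigma> r j) s) = c / r\<^sup>2"
    using assms threshold_pos by (intro ex1_det_Omega_eq) auto
  from theI'[OF this] assms(3)
  show "\<sigma> r (Suc j) \<in> {\<sigma> r j<..<b}" "det (Omega H (\<sigma> r j) (\<sigma> r (Suc j))) = c / r\<^sup>2"
    by (simp_all add: alg_sigma.simps(2) Let_def)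
qed

lemma alg_sigma_in_interval: "r \<noteq> 0 \<Longrightarrow> \<sigma> r j \<in> {a..b}"
proof (induction j)
  case 0
  then show ?case using a_less_b by simp
next
  case (Suc j)
  then show ?case
    using alg_sigma_Suc_if_gt[of r j] alg_sigma_Suc_if_le[of r j] a_less_b
    by (cases "c / r\<^sup>2 < det (Omega H (\<sigma> r j) b)") auto
qed

lemma kappa_exists:
  assumes "r \<noteq> 0"
  shows "\<exists>j. 1 \<le> j \<and> \<not> c / r\<^sup>2 < det (Omega H (\<sigma> r (j - 1)) b)"
proof (rule ccontr)
  define e where "e = c / r\<^sup>2"
  have e: "0 < e" unfolding e_def using assms by (rule threshold_pos)
  assume none: "\<not> ?thesis"
  have "e < det (Omega H (\<sigma> r j) b)" for j
    using none by (auto simp: e_def dest: spec[of _ "Suc j"])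
  then have steps: "\<sigma> r j \<le> \<sigma> r (Suc j)" "e \<le> det (Omega H (\<sigma> r j) (\<sigma> r (Suc j)))" for j
    using alg_sigma_Suc_if_gt[OF assms alg_sigma_in_interval[OF assms]] by (auto simp: e_def less_imp_le)
  obtain n :: nat where n: "det (Omega H a b) < real n * e"
    using ex_less_of_nat_mult[OF e] by blast
  then have "1 \<le> n" using det_psd2_nonneg[OF psd2_Omega[of a b]] by (cases n) auto
  then have "real n * e \<le> (real n)\<^sup>2 * e" using e by (simp add: power2_eq_square)
  also have "\<dots> \<le> det (Omega H (\<sigma> r 0) (\<sigma> r n))"
    using alg_sigma_in_interval[OF assms] steps e by (intro det_Omega_chain_ge) auto
  also have "\<dots> \<le> det (Omega H a b)"
    using alg_sigma_in_interval[OF assms, of n] by (intro det_Omega_mono) auto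
  finally show False using n by simp
qed

lemma kappa_ge_1: "r \<noteq> 0 \<Longrightarrow> 1 \<le> \<kappa> r"
  unfolding kappa_def using LeastI_ex[OF kappa_exists] by blast

lemma kappa_stops: "r \<noteq> 0 \<Longrightarrow> \<not> c / r\<^sup>2 < det (Omega H (\<sigma> r (\<kappa> r - 1)) b)"
  unfolding kappa_def using LeastI_ex[OF kappa_exists] by blast

lemma kappa_continues: "Suc j < \<kappa> r \<Longrightarrow> c / r\<^sup>2 < det (Omega H (\<sigma> r j) b)"
  unfolding kappa_def using not_less_Least[of "Suc j"] by fastforce

lemma kappa_le: "\<not> c / r\<^sup>2 < det (Omega H (\<sigma> r j) b) \<Longrightarrow> \<kappa> r \<le> Suc j"
  unfolding kappa_def by (rule Least_le) simp

lemma alg_sigma_before_kappa: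
  assumes "r \<noteq> 0" "Suc j < \<kappa> r"
  shows "\<sigma> r (Suc j) \<in> {\<sigma> r j<..<b}" "det (Omega H (\<sigma> r j) (\<sigma> r (Suc j))) = c / r\<^sup>2"
  using alg_sigma_Suc_if_gt[OF assms(1) alg_sigma_in_interval[OF assms(1)] kappa_continues[OF assms(2)]]
  by simp_all

lemma is_partition_alg_sigma:
  assumes r: "r \<noteq> 0"
  shows "is_partition a b (\<kappa> r) (\<sigma> r)"
  unfolding is_partition_def
proof (intro conjI allI impI)
  show "\<sigma> r 0 = a" by simp
  have "Suc (\<kappa> r - 1) = \<kappa> r" using kappa_ge_1[OF r] by simp
  then show "\<sigma> r (\<kappa> r) = b" using alg_sigma_Suc_if_le[OF kappa_stops[OF r]] by simp
  fix l assume l: "l < \<kappa> r"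
  have "\<sigma> r l < b"
  proof (cases l)
    case 0
    then show ?thesis using a_less_b by simp
  next
    case (Suc l')
    then show ?thesis using alg_sigma_before_kappa(1)[OF r, of l'] l by simp
  qed
  then show "\<sigma> r l < \<sigma> r (Suc l)"
    using alg_sigma_Suc_if_gt(1)[OF r alg_sigma_in_interval[OF r]] alg_sigma_Suc_if_le[of r l]
    by (cases "c / r\<^sup>2 < det (Omega H (\<sigma> r l) b)") auto
qed

lemma partition_le_alg_sigma:
  assumes r: "r \<noteq> 0" and s: "is_partition a b k s"
    and small: "\<And>l. l < k \<Longrightarrow> det (Omega H (s l) (s (Suc l))) \<le> c / r\<^sup>2"
  shows "j < k \<Longrightarrow> s j \<le> \<sigma> r j"
proof (induction j)
  case 0
  then show ?case using s by (simp add: is_partition_def)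
next
  case (Suc j)
  then have IH: "s j \<le> \<sigma> r j" by simp
  have s_j: "s j \<in> {a..b}" "s (Suc j) \<in> {a..b}" "s j \<le> s (Suc j)"
    using Suc.prems is_partition_in_interval[OF s, of j] is_partition_in_interval[OF s, of "Suc j"]
      is_partition_mono[OF s, of j "Suc j"] by simp_all
  show ?case
  proof (cases "c / r\<^sup>2 < det (Omega H (\<sigma> r j) b)")
    case True
    note step = alg_sigma_Suc_if_gt[OF r alg_sigma_in_interval[OF r] True]
    show ?thesis
    proof (rule ccontr)
      assume "\<not> s (Suc j) \<le> \<sigma> r (Suc j)"
      have "c / r\<^sup>2 = det (Omega H (\<sigma> r j) (\<sigma> r (Suc j)))" using step(2) by simp
      also have "\<dots> < det (Omega H (\<sigma> r j) (s (Suc j)))"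
        using alg_sigma_in_interval[OF r, of j] step s_j \<open>\<not> s (Suc j) \<le> \<sigma> r (Suc j)\<close> threshold_pos[OF r]
        by (intro det_Omega_strict_mono) auto
      also have "\<dots> \<le> det (Omega H (s j) (s (Suc j)))"
        using s_j IH step \<open>\<not> s (Suc j) \<le> \<sigma> r (Suc j)\<close> by (intro det_Omega_mono) auto
      also have "\<dots> \<le> c / r\<^sup>2" using small Suc.prems by simp
      finally show False by simp
    qed
  next
    case False
    then show ?thesis using alg_sigma_Suc_if_le s_j by simp
  qed
qed

lemma kappa_le_partition:
  assumes r: "r \<noteq> 0" and s: "is_partition a b k s"
    and small: "\<And>l. l < k \<Longrightarrow> det (Omega H (s l) (s (Suc l))) \<le> c / r\<^sup>2"
  shows "\<kappa> r \<le> k"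
proof -
  have "k \<noteq> 0" using s a_less_b by (cases k) (auto simp: is_partition_def)
  then have k: "Suc (k - 1) = k" by simp
  have "det (Omega H (\<sigma> r (k - 1)) b) \<le> det (Omega H (s (k - 1)) (s k))"
    using partition_le_alg_sigma[OF r s small, of "k - 1"] alg_sigma_in_interval[OF r, of "k - 1"]
      is_partition_in_interval[OF s, of "k - 1"] s k
    by (intro det_Omega_mono) (auto simp: is_partition_def)
  also have "\<dots> \<le> c / r\<^sup>2" using small[of "k - 1"] k by simp
  finally show ?thesis using kappa_le[of r "k - 1"] k by simp
qed

lemma det_Omega_to_b_gt:
  assumes r: "r \<noteq> 0" and s: "is_partition a b k s"
    and large: "\<And>l. Suc l < k \<Longrightarrow> c / r\<^sup>2 \<le> det (Omega H (s l) (s (Suc l)))"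
    and "Suc l < k" "a \<le> x" "x \<le> s l"
  shows "c / r\<^sup>2 < det (Omega H x b)"
proof -
  have "c / r\<^sup>2 \<le> det (Omega H (s l) (s (Suc l)))" using large assms(4) .
  also have "\<dots> < det (Omega H (s l) b)"
    using is_partition_in_interval[OF s, of l] is_partition_mono[OF s, of l "Suc l"]
      is_partition_strict_mono[OF s, of "Suc l" k] s assms(4)
      less_le_trans[OF threshold_pos[OF r] large[OF assms(4)]]
    by (intro det_Omega_strict_mono) (auto simp: is_partition_def)
  also have "\<dots> \<le> det (Omega H x b)"
    using is_partition_in_interval[OF s, of l] assms(4-6) by (intro det_Omega_mono) auto
  finally show ?thesis .
qed

lemma alg_sigma_le_partition:
  assumes r: "r \<noteq> 0" and s: "is_partition a b k s"
    and large: "\<And>l. Suc l < k \<Longrightarrow> c / r\<^sup>2 \<le> det (Omega H (s l) (s (Suc l)))"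
  shows "j < k \<Longrightarrow> \<sigma> r j \<le> s j"
proof (induction j)
  case 0
  then show ?case using s by (simp add: is_partition_def)
next
  case (Suc j)
  then have IH: "\<sigma> r j \<le> s j" by simp
  have s_j: "s (Suc j) \<in> {a..b}" "s j \<le> s (Suc j)"
    using Suc.prems is_partition_in_interval[OF s, of "Suc j"] is_partition_mono[OF s, of j "Suc j"]
    by simp_all
  have "c / r\<^sup>2 < det (Omega H (\<sigma> r j) b)"
    using det_Omega_to_b_gt[OF r s large Suc.prems, of "\<sigma> r j"] alg_sigma_in_interval[OF r, of j] IH
    by simp
  note step = alg_sigma_Suc_if_gt[OF r alg_sigma_in_interval[OF r] this]
  show ?case
  proof (rule ccontr)
    assume less: "\<not> \<sigma> r (Suc j) \<le> s (Suc j)"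
    have "c / r\<^sup>2 \<le> det (Omega H (s j) (s (Suc j)))" using large Suc.prems .
    also have "\<dots> \<le> det (Omega H (\<sigma> r j) (s (Suc j)))"
      using alg_sigma_in_interval[OF r, of j] IH s_j by (intro det_Omega_mono) auto
    finally have pos: "c / r\<^sup>2 \<le> det (Omega H (\<sigma> r j) (s (Suc j)))" .
    then have "det (Omega H (\<sigma> r j) (s (Suc j))) < det (Omega H (\<sigma> r j) (\<sigma> r (Suc j)))"
      using alg_sigma_in_interval[OF r, of j] IH s_j step less less_le_trans[OF threshold_pos[OF r] pos]
      by (intro det_Omega_strict_mono) auto
    with pos step(2) show False by simp
  qed
qed

lemma partition_le_kappa:
  assumes r: "r \<noteq> 0" and s: "is_partition a b k s"
    and large: "\<And>l. Suc l < k \<Longrightarrow> c / r\<^sup>2 \<le> det (Omega H (s l) (s (Suc l)))"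
  shows "k \<le> \<kappa> r"
proof (rule ccontr)
  assume "\<not> k \<le> \<kappa> r"
  moreover have "Suc (\<kappa> r - 1) = \<kappa> r" using kappa_ge_1[OF r] by simp
  ultimately have "c / r\<^sup>2 < det (Omega H (\<sigma> r (\<kappa> r - 1)) b)"
    using det_Omega_to_b_gt[OF r s large, of "\<kappa> r - 1" "\<sigma> r (\<kappa> r - 1)"]
      alg_sigma_le_partition[OF r s large, of "\<kappa> r - 1"] alg_sigma_in_interval[OF r, of "\<kappa> r - 1"]
    by simp
  with kappa_stops[OF r] show False ..
qed

lemma kappa_mono:
  assumes "0 < r" "r \<le> r'"
  shows "\<kappa> r \<le> \<kappa> r'"
proof (rule partition_le_kappa)
  have r: "r \<noteq> 0" using assms(1) by simp
  show "r' \<noteq> 0" using assms by simp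
  show "is_partition a b (\<kappa> r) (\<sigma> r)" by (rule is_partition_alg_sigma[OF r])
  fix l assume "Suc l < \<kappa> r"
  have "c / r'\<^sup>2 \<le> c / r\<^sup>2"
    using assms c_pos by (intro divide_left_mono power_mono mult_pos_pos) auto
  also have "\<dots> = det (Omega H (\<sigma> r l) (\<sigma> r (Suc l)))"
    using alg_sigma_before_kappa(2)[OF r \<open>Suc l < \<kappa> r\<close>] by simp
  finally show "c / r'\<^sup>2 \<le> det (Omega H (\<sigma> r l) (\<sigma> r (Suc l)))" .
qed

lemma det_Omega_alg_sigma_block:
  assumes n: "0 < n" and r: "0 < r" and i: "i + n < \<kappa> (real n * r)"
  shows "c / r\<^sup>2 \<le> det (Omega H (\<sigma> (real n * r) i) (\<sigma> (real n * r) (i + n)))"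
proof -
  define r' where "r' = real n * r"
  have r': "r' \<noteq> 0" using n r by (simp add: r'_def)
  have "c / r\<^sup>2 = (real n)\<^sup>2 * (c / r'\<^sup>2)"
    using n r by (simp add: r'_def power_mult_distrib)
  also have "\<dots> \<le> det (Omega H (\<sigma> r' (i + 0)) (\<sigma> r' (i + n)))"
  proof (rule det_Omega_chain_ge)
    show "a \<le> \<sigma> r' (i + 0)" "\<sigma> r' (i + n) \<le> b" using alg_sigma_in_interval[OF r'] by simp_all
    show "0 \<le> c / r'\<^sup>2" using c_pos by simp
    fix j assume "j < n"
    then have "Suc (i + j) < \<kappa> r'" using i by (simp add: r'_def)
    then show "\<sigma> r' (i + j) \<le> \<sigma> r' (i + Suc j)"
      and "c / r'\<^sup>2 \<le> det (Omega H (\<sigma> r' (i + j)) (\<sigma> r' (i + Suc j)))"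
      using alg_sigma_before_kappa[OF r'] by (auto intro: less_imp_le)
  qed
  finally show ?thesis by (simp add: r'_def)
qed

lemma kappa_mult:
  assumes n: "0 < n" and r: "0 < r"
  shows "\<kappa> (real n * r) \<le> n * \<kappa> r"
proof -
  define m where "m = \<kappa> (real n * r)"
  define p where "p = (LEAST p. m \<le> p * n)"
  have part: "is_partition a b m (\<sigma> (real n * r))"
    unfolding m_def using n r by (intro is_partition_alg_sigma) simp
  have "m \<le> m * n" using n by simp
  then have m_le: "m \<le> p * n"
    unfolding p_def by (rule LeastI)
  have below_m: "l * n < m" if "l < p" for l
    using not_less_Least[OF that[unfolded p_def]] by simp
  define s where "s l = \<sigma> (real n * r) (min (l * n) m)" for l
  have "p \<le> \<kappa> r"
  proof (rule partition_le_kappa)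
    show "r \<noteq> 0" using r by simp
    show "is_partition a b p s"
      unfolding is_partition_def
    proof (intro conjI allI impI)
      show "s 0 = a" "s p = b" using part m_le by (simp_all add: s_def is_partition_def)
      show "s l < s (Suc l)" if "l < p" for l
        using below_m[OF that] n by (auto simp: s_def intro!: is_partition_strict_mono[OF part])
    qed
    show "c / r\<^sup>2 \<le> det (Omega H (s l) (s (Suc l)))" if "Suc l < p" for l
      using det_Omega_alg_sigma_block[OF n r, of "l * n"] below_m[OF that]
      by (simp add: s_def m_def add.commute)
  qed
  then have "m \<le> \<kappa> r * n" using m_le by (meson le_trans mult_le_mono1)
  then show ?thesis by (simp add: m_def mult.commute)
qed

end

theorem proposition5p9:
  fixes a b c :: real and H :: "real \<Rightarrow> real^2^2"
  assumes "a < b"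
    and "hamiltonian a b H"
    and "limit_circle a b H"
    and "c > 0"
  shows
    "(\<forall>r (s::nat \<Rightarrow> real) k. r > 0 \<and> s 0 = a \<and> s k = b \<and> (\<forall>l<k. s l < s (Suc l)) \<longrightarrow>
        ((\<forall>l\<in>{1..k}. det (Omega H (s (l - 1)) (s l)) \<le> c / r\<^sup>2) \<longrightarrow> kappa a b H c r \<le> k) \<and>
        ((\<forall>l\<in>{1..<k}. det (Omega H (s (l - 1)) (s l)) \<ge> c / r\<^sup>2) \<longrightarrow> kappa a b H c r \<ge> k))
     \<and> mono_on {0<..} (kappa a b H c)
     \<and> (\<forall>(n::nat) r. n > 0 \<and> r > 0 \<longrightarrow> kappa a b H c (real n * r) \<le> n * kappa a b H c r)"
proof -
  interpret kappa_algorithm a b H c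
    using assms by unfold_locales
  show ?thesis
  proof (intro conjI allI impI)
    fix r :: real and s :: "nat \<Rightarrow> real" and k :: nat
    assume "r > 0 \<and> s 0 = a \<and> s k = b \<and> (\<forall>l<k. s l < s (Suc l))"
    then have r: "r \<noteq> 0" and s: "is_partition a b k s"
      by (auto simp: is_partition_def)
    show "kappa a b H c r \<le> k" if small: "\<forall>l\<in>{1..k}. det (Omega H (s (l - 1)) (s l)) \<le> c / r\<^sup>2"
    proof (rule kappa_le_partition[OF r s])
      show "det (Omega H (s l) (s (Suc l))) \<le> c / r\<^sup>2" if "l < k" for l
        using small[rule_format, of "Suc l"] that by simp
    qed
    show "kappa a b H c r \<ge> k" if large: "\<forall>l\<in>{1..<k}. det (Omega H (s (l - 1)) (s l)) \<ge> c / r\<^sup>2"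
    proof (rule partition_le_kappa[OF r s])
      show "c / r\<^sup>2 \<le> det (Omega H (s l) (s (Suc l)))" if "Suc l < k" for l
        using large[rule_format, of "Suc l"] that by simp
    qed
  next
    show "mono_on {0<..} (kappa a b H c)"
      by (rule mono_onI) (simp add: kappa_mono)
    show "kappa a b H c (real n * r) \<le> n * kappa a b H c r" if "n > 0 \<and> r > 0" for n r
      using that kappa_mult by simp
  qed
qed

end
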